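(* Let $l:G\to\Lambda$ be a complete $\delta$-hyperbolic length function on a group $G$ ($\delta\in\Lambda$, $\delta\geqslant0$). Let $A=\ker(l)=\{g: l(g)=0\}$, $X_l=G/A$ (left cosets) and $d_l(gA,hA)=l(g^{-1}h)$. Then the $\delta$-hyperbolic $\Lambda$-metric space $(X_l,d_l)$ is quasi-geodesic.
   Context: $\Lambda$ is an ordered abelian group with ordered divisible hull $\Lambda_{\mathbb{Q}}\supseteq\Lambda$. A length function on $G$ is $l:G\to\Lambda$ with $l(g)\geqslant0$, $l(1)=0$, $l(g)=l(g^{-1})$, $l(gh)\leqslant l(g)+l(h)$; $d_l$ is then a well-defined $\Lambda$-metric. Let $c(g,h)=\tfrac12(l(g)+l(h)-l(g^{-1}h))\in\Lambda_{\mathbb{Q}}$; $l$ is $\delta$-hyperbolic if $c(f,g)\geqslant\min\{c(f,h),c(g,h)\}-\delta$ for all $f,g,h$. Write $g=u\circ g_1$ if $g=ug_1$ and $l(g)=l(u)+l(g_1)$. $l$ is complete if for every $g\in G$ and every $\alpha\in\Lambda$ with $0\leqslant\alpha\leqslant l(g)$ there exist $u,g_1$ with $g=u\circ g_1$ and $l(u)=\alpha$. A $\Lambda$-metric space $(X,d)$ is quasi-geodesic if there is a constant $C\in\Lambda$, $C\geqslant0$, such that for all $x,y\in X$ there is a map $\gamma:\{t\in\Lambda:0\leqslant t\leqslant d(x,y)\}\to X$ with $\gamma(0)=x$, $\gamma(d(x,y))=y$ and $\beta-\alpha\leqslant d(\gamma(\alpha),\gamma(\beta))\leqslant\beta-\alpha+C$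 whenever $0\leqslant\alpha\leqslant\beta\leqslant d(x,y)$. *)

theory Defs
  imports "HOL-Algebra.Coset"
begin

definition length_function :: "('g, 'b) monoid_scheme \<Rightarrow> ('g \<Rightarrow> 'a::linordered_ab_group_add) \<Rightarrow> bool" where
  "length_function G l \<longleftrightarrow>
     (\<forall>g\<in>carrier G. 0 \<le> l g) \<and> l \<one>\<^bsub>G\<^esub> = 0 \<and>
     (\<forall>g\<in>carrier G. l (inv\<^bsub>G\<^esub> g) = l g) \<and>
     (\<forall>g\<in>carrier G. \<forall>h\<in>carrier G. l (g \<otimes>\<^bsub>G\<^esub> h) \<le> l g + l h)"

text \<open>Twice the Gromov product: 2 c(g,h) = l(g) + l(h) - l(g^{-1} h), which lies
in 'a (avoiding the divisible hull).\<close>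

definition gromov2 :: "('g, 'b) monoid_scheme \<Rightarrow> ('g \<Rightarrow> 'a::linordered_ab_group_add) \<Rightarrow> 'g \<Rightarrow> 'g \<Rightarrow> 'a" where
  "gromov2 G l g h = l g + l h - l (inv\<^bsub>G\<^esub> g \<otimes>\<^bsub>G\<^esub> h)"

text \<open>c(f,g) >= min(c(f,h), c(g,h)) - delta, multiplied by 2.\<close>

definition hyperbolic_length :: "('g, 'b) monoid_scheme \<Rightarrow> ('g \<Rightarrow> 'a::linordered_ab_group_add) \<Rightarrow> 'a \<Rightarrow> bool" where
  "hyperbolic_length G l \<delta> \<longleftrightarrow>
     (\<forall>f\<in>carrier G. \<forall>g\<in>carrier G. \<forall>h\<in>carrier G.
        gromov2 G l f g \<ge> min (gromov2 G l f h) (gromov2 G l g h) - (\<delta> + \<delta>))"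

definition complete_length :: "('g, 'b) monoid_scheme \<Rightarrow> ('g \<Rightarrow> 'a::linordered_ab_group_add) \<Rightarrow> bool" where
  "complete_length G l \<longleftrightarrow>
     (\<forall>g\<in>carrier G. \<forall>\<alpha>. 0 \<le> \<alpha> \<and> \<alpha> \<le> l g \<longrightarrow>
        (\<exists>u\<in>carrier G. \<exists>g1\<in>carrier G. g = u \<otimes>\<^bsub>G\<^esub> g1 \<and> l g = l u + l g1 \<and> l u = \<alpha>))"

definition length_kernel :: "('g, 'b) monoid_scheme \<Rightarrow> ('g \<Rightarrow> 'a::linordered_ab_group_add) \<Rightarrow> 'g set" where
  "length_kernel G l = {g \<in> carrier G. l g = 0}"

definition length_space :: "('g, 'b) monoid_scheme \<Rightarrow> ('g \<Rightarrow> 'a::linordered_ab_group_add) \<Rightarrow> 'g set set" where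
  "length_space G l = {g <#\<^bsub>G\<^esub> length_kernel G l | g. g \<in> carrier G}"

text \<open>d_l(gA, hA) = l(g^{-1} h), computed from arbitrary representatives
(well defined when A = ker l).\<close>

definition length_dist :: "('g, 'b) monoid_scheme \<Rightarrow> ('g \<Rightarrow> 'a::linordered_ab_group_add) \<Rightarrow> 'g set \<Rightarrow> 'g set \<Rightarrow> 'a" where
  "length_dist G l x y = l (inv\<^bsub>G\<^esub> (SOME g. g \<in> x) \<otimes>\<^bsub>G\<^esub> (SOME h. h \<in> y))"

definition quasi_geodesic :: "'x set \<Rightarrow> ('x \<Rightarrow> 'x \<Rightarrow> 'a::linordered_ab_group_add) \<Rightarrow> bool" where
  "quasi_geodesic X d \<longleftrightarrow>
     (\<exists>C. 0 \<le> C \<and>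
       (\<forall>x\<in>X. \<forall>y\<in>X. \<exists>\<gamma>.
          (\<forall>t. 0 \<le> t \<and> t \<le> d x y \<longrightarrow> \<gamma> t \<in> X) \<and>
          \<gamma> 0 = x \<and> \<gamma> (d x y) = y \<and>
          (\<forall>\<alpha> \<beta>. 0 \<le> \<alpha> \<and> \<alpha> \<le> \<beta> \<and> \<beta> \<le> d x y \<longrightarrow>
             \<beta> - \<alpha> \<le> d (\<gamma> \<alpha>) (\<gamma> \<beta>) \<and> d (\<gamma> \<alpha>) (\<gamma> \<beta>) \<le> \<beta> - \<alpha> + C)))"

end

theory Submission
  imports Defs
begin

text \<open>Completeness of \<open>l\<close> lets one pick, for \<open>f = g\<^sup>-\<^sup>1h\<close> and every \<open>0 \<le> t \<le> l f\<close>, a prefix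
\<open>u\<^sub>t\<close> of \<open>f\<close> with \<open>l u\<^sub>t = t\<close> and \<open>l (u\<^sub>t\<^sup>-\<^sup>1 f) = l f - t\<close>; the path \<open>t \<mapsto> g u\<^sub>t A\<close> joins \<open>gA\<close> to \<open>hA\<close>.
Its distances are at least \<open>\<beta> - \<alpha>\<close> by the triangle inequality, and at most \<open>\<beta> - \<alpha> + 2\<delta>\<close>
because both prefixes have Gromov product \<open>c(u\<^sub>t, f) = t\<close> with \<open>f\<close>, so hyperbolicity gives
\<open>c(u\<^sub>\<alpha>, u\<^sub>\<beta>) \<ge> \<alpha> - \<delta>\<close>.\<close>

locale length_group = group G for G (structure) +
  fixes l :: "'g \<Rightarrow> 'a::linordered_ab_group_add"
  assumes length_function: "length_function G l"
begin

lemma length_nonneg: "g \<in> carrier G \<Longrightarrow> 0 \<le> l g"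
  and length_one: "l \<one> = 0"
  and length_inv: "g \<in> carrier G \<Longrightarrow> l (inv g) = l g"
  and length_mult_le: "g \<in> carrier G \<Longrightarrow> h \<in> carrier G \<Longrightarrow> l (g \<otimes> h) \<le> l g + l h"
  using length_function unfolding length_function_def by auto

lemma length_kernel_subgroup: "subgroup (length_kernel G l) G"
proof
  fix x y assume "x \<in> length_kernel G l" "y \<in> length_kernel G l"
  then show "x \<otimes> y \<in> length_kernel G l"
    using length_mult_le[of x y] length_nonneg[of "x \<otimes> y"] unfolding length_kernel_def by auto
qed (auto simp: length_kernel_def length_one length_inv)

lemma length_kernel_carrier: "k \<in> length_kernel G l \<Longrightarrow> k \<in> carrier G"
  by (simp add: length_kernel_def)

lemma length_mult_kernel_right:
  assumes "g \<in> carrier G" "k \<in> length_kernel G l"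
  shows "l (g \<otimes> k) = l g"
proof -
  have k: "k \<in> carrier G" "l k = 0" "l (inv k) = 0"
    using assms(2) length_inv by (auto simp: length_kernel_def)
  have "l (g \<otimes> k) \<le> l g" using length_mult_le[of g k] assms k by simp
  moreover have "l g \<le> l (g \<otimes> k)"
    using length_mult_le[of "g \<otimes> k" "inv k"] assms k by (simp add: m_assoc)
  ultimately show ?thesis by simp
qed

lemma length_mult_kernel_left:
  assumes "g \<in> carrier G" "k \<in> length_kernel G l"
  shows "l (k \<otimes> g) = l g"
  using length_mult_kernel_right[of "inv g" "inv k"] assms length_kernel_subgroup
  by (simp add: length_inv length_kernel_carrier subgroup.m_inv_closed flip: inv_mult_group)

lemma l_coset_mult_kernel:
  assumes "a \<in> carrier G" "k \<in> length_kernel G l"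
  shows "(a \<otimes> k) <# length_kernel G l = a <# length_kernel G l"
proof -
  have "(a \<otimes> k) <# length_kernel G l = a <# (k <# length_kernel G l)"
    using assms length_kernel_subgroup by (simp add: lcos_m_assoc subgroup.subset length_kernel_carrier)
  also have "k <# length_kernel G l = length_kernel G l"
    using assms length_kernel_subgroup by (simp add: coset_join3 length_kernel_carrier)
  finally show ?thesis .
qed

lemma length_dist_l_coset:
  assumes a: "a \<in> carrier G" and b: "b \<in> carrier G"
  shows "length_dist G l (a <# length_kernel G l) (b <# length_kernel G l) = l (inv a \<otimes> b)"
proof -
  have coset_element: "\<exists>x. x \<in> c <# length_kernel G l" if "c \<in> carrier G" for c
    using that subgroup.one_closed[OF length_kernel_subgroup] unfolding l_coset_def by force
  obtain k where k: "k \<in> length_kernel G l" "(SOME x. x \<in> a <# length_kernel G l) = a \<otimes> k"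
    using someI_ex[OF coset_element[OF a]] unfolding l_coset_def by auto
  obtain k' where k': "k' \<in> length_kernel G l" "(SOME x. x \<in> b <# length_kernel G l) = b \<otimes> k'"
    using someI_ex[OF coset_element[OF b]] unfolding l_coset_def by auto
  have "inv (a \<otimes> k) \<otimes> (b \<otimes> k') = inv k \<otimes> (inv a \<otimes> b \<otimes> k')"
    using a b k k' by (simp add: length_kernel_carrier inv_mult_group m_assoc)
  moreover have "inv k \<in> length_kernel G l"
    using k(1) length_kernel_subgroup by (simp add: subgroup.m_inv_closed)
  ultimately show ?thesis
    using a b k k' unfolding length_dist_def
    by (simp add: length_mult_kernel_left length_mult_kernel_right length_kernel_carrier)
qed

lemma length_diff_le: "g \<in> carrier G \<Longrightarrow> h \<in> carrier G \<Longrightarrow> l h - l g \<le> l (inv g \<otimes> h)"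
  using length_mult_le[of g "inv g \<otimes> h"] by (simp add: algebra_simps flip: m_assoc)

lemma complete_length_prefixes:
  assumes "complete_length G l" "f \<in> carrier G"
  obtains u where "\<And>t. 0 \<le> t \<Longrightarrow> t \<le> l f \<Longrightarrow>
    u t \<in> carrier G \<and> l (u t) = t \<and> l (inv (u t) \<otimes> f) = l f - t"
proof -
  have "\<exists>v. 0 \<le> t \<and> t \<le> l f \<longrightarrow> v \<in> carrier G \<and> l v = t \<and> l (inv v \<otimes> f) = l f - t" for t
  proof (cases "0 \<le> t \<and> t \<le> l f")
    case True
    then obtain v w where v: "v \<in> carrier G" "w \<in> carrier G" "f = v \<otimes> w" "l f = l v + l w" "l v = t"
      using assms unfolding complete_length_def by blast
    then have "inv v \<otimes> f = w" by (simp flip: m_assoc)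
    with v show ?thesis by auto
  qed blast
  then show ?thesis using that by metis
qed

lemma hyperbolic_prefix_dist_le:
  assumes "hyperbolic_length G l \<delta>"
    and "u \<in> carrier G" "v \<in> carrier G" "f \<in> carrier G"
    and "l (inv u \<otimes> f) = l f - l u" "l (inv v \<otimes> f) = l f - l v" "l u \<le> l v"
  shows "l (inv u \<otimes> v) \<le> l v - l u + (\<delta> + \<delta>)"
proof -
  have "min (gromov2 G l u f) (gromov2 G l v f) - (\<delta> + \<delta>) \<le> gromov2 G l u v"
    using assms(1-4) unfolding hyperbolic_length_def by blast
  moreover have "min (gromov2 G l u f) (gromov2 G l v f) = l u + l u"
    using assms(5-7) add_mono[OF assms(7) assms(7)] by (simp add: gromov2_def min_def)
  ultimately show ?thesis by (simp add: gromov2_def algebra_simps)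
qed

lemma quasi_geodesic_segment:
  assumes complete: "complete_length G l" and hyp: "hyperbolic_length G l \<delta>"
    and g: "g \<in> carrier G" and h: "h \<in> carrier G"
  defines "x \<equiv> g <# length_kernel G l" and "y \<equiv> h <# length_kernel G l"
  shows "\<exists>\<gamma>. (\<forall>t. 0 \<le> t \<and> t \<le> length_dist G l x y \<longrightarrow> \<gamma> t \<in> length_space G l) \<and>
          \<gamma> 0 = x \<and> \<gamma> (length_dist G l x y) = y \<and>
          (\<forall>\<alpha> \<beta>. 0 \<le> \<alpha> \<and> \<alpha> \<le> \<beta> \<and> \<beta> \<le> length_dist G l x y \<longrightarrow>
             \<beta> - \<alpha> \<le> length_dist G l (\<gamma> \<alpha>) (\<gamma> \<beta>) \<and>
             length_dist G l (\<gamma> \<alpha>) (\<gamma> \<beta>) \<le> \<beta> - \<alpha> + (\<delta> + \<delta>))"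
proof -
  define f where "f = inv g \<otimes> h"
  have f: "f \<in> carrier G" "0 \<le> l f" using g h length_nonneg by (simp_all add: f_def)
  have dist_xy: "length_dist G l x y = l f"
    using length_dist_l_coset[OF g h] by (simp add: x_def y_def f_def)
  obtain u where u: "\<And>t. 0 \<le> t \<Longrightarrow> t \<le> l f \<Longrightarrow>
      u t \<in> carrier G \<and> l (u t) = t \<and> l (inv (u t) \<otimes> f) = l f - t"
    using complete_length_prefixes[OF complete f(1)] by blast
  define \<gamma> where "\<gamma> t = (g \<otimes> u t) <# length_kernel G l" for t
  have dist_\<gamma>: "length_dist G l (\<gamma> \<alpha>) (\<gamma> \<beta>) = l (inv (u \<alpha>) \<otimes> u \<beta>)"
    if "0 \<le> \<alpha>" "\<alpha> \<le> l f" "0 \<le> \<beta>" "\<beta> \<le> l f" for \<alpha> \<beta>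
    using that u[of \<alpha>] u[of \<beta>] g length_dist_l_coset[of "g \<otimes> u \<alpha>" "g \<otimes> u \<beta>"]
    by (simp add: \<gamma>_def inv_mult_group m_assoc) (simp flip: m_assoc)
  have "u 0 \<in> length_kernel G l" using u[of 0] f by (simp add: length_kernel_def)
  then have start: "\<gamma> 0 = x" by (simp add: \<gamma>_def x_def l_coset_mult_kernel g)
  have rest: "inv (u (l f)) \<otimes> f \<in> length_kernel G l" using u[of "l f"] f by (simp add: length_kernel_def)
  have "h = g \<otimes> u (l f) \<otimes> (inv (u (l f)) \<otimes> f)"
    using u[of "l f"] f g h by (simp add: f_def m_assoc) (simp flip: m_assoc)
  then have finish: "\<gamma> (l f) = y"
    using l_coset_mult_kernel[OF _ rest, of "g \<otimes> u (l f)"] u[of "l f"] f g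
    by (simp add: \<gamma>_def y_def)
  show ?thesis
  proof (intro exI[of _ \<gamma>] conjI allI impI)
    fix \<alpha> \<beta> assume "0 \<le> \<alpha> \<and> \<alpha> \<le> \<beta> \<and> \<beta> \<le> length_dist G l x y"
    then have ab: "0 \<le> \<alpha>" "\<alpha> \<le> l f" "0 \<le> \<beta>" "\<beta> \<le> l f" "\<alpha> \<le> \<beta>" by (auto simp: dist_xy)
    show "\<beta> - \<alpha> \<le> length_dist G l (\<gamma> \<alpha>) (\<gamma> \<beta>)"
      using length_diff_le[of "u \<alpha>" "u \<beta>"] u[of \<alpha>] u[of \<beta>] ab by (simp add: dist_\<gamma>)
    show "length_dist G l (\<gamma> \<alpha>) (\<gamma> \<beta>) \<le> \<beta> - \<alpha> + (\<delta> + \<delta>)"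
      using hyperbolic_prefix_dist_le[OF hyp, of "u \<alpha>" "u \<beta>" f] u[of \<alpha>] u[of \<beta>] ab f
      by (simp add: dist_\<gamma>)
  qed (use start finish u g in \<open>auto simp: dist_xy \<gamma>_def length_space_def\<close>)
qed

end

theorem mainTheorem15:
  fixes G :: "('g, 'b) monoid_scheme"
    and l :: "'g \<Rightarrow> 'a::linordered_ab_group_add"
    and \<delta> :: 'a
  assumes "group G"
    and "length_function G l"
    and "complete_length G l"
    and "0 \<le> \<delta>"
    and "hyperbolic_length G l \<delta>"
  shows "quasi_geodesic (length_space G l) (length_dist G l)"
proof -
  interpret length_group G l
    using assms(1,2) by (simp add: length_group_def length_group_axioms_def)
  show ?thesis unfolding quasi_geodesic_def
  proof (intro exI[of _ "\<delta> + \<delta>"] conjI ballI)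
    show "0 \<le> \<delta> + \<delta>" using assms(4) by simp
    fix x y assume "x \<in> length_space G l" "y \<in> length_space G l"
    then obtain g h where "g \<in> carrier G" "h \<in> carrier G"
      and "x = g <#\<^bsub>G\<^esub> length_kernel G l" "y = h <#\<^bsub>G\<^esub> length_kernel G l"
      unfolding length_space_def by auto
    then show "\<exists>\<gamma>. (\<forall>t. 0 \<le> t \<and> t \<le> length_dist G l x y \<longrightarrow> \<gamma> t \<in> length_space G l) \<and>
          \<gamma> 0 = x \<and> \<gamma> (length_dist G l x y) = y \<and>
          (\<forall>\<alpha> \<beta>. 0 \<le> \<alpha> \<and> \<alpha> \<le> \<beta> \<and> \<beta> \<le> length_dist G l x y \<longrightarrow>
             \<beta> - \<alpha> \<le> length_dist G l (\<gamma> \<alpha>) (\<gamma> \<beta>) \<and>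
             length_dist G l (\<gamma> \<alpha>) (\<gamma> \<beta>) \<le> \<beta> - \<alpha> + (\<delta> + \<delta>))"
      using quasi_geodesic_segment[OF assms(3,5)] by blast
  qed
qed

end
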